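(* Let $\{(i\mid A_i): i\in[m]\}$ be an index coding instance, $B_i=[m]\setminus(A_i\cup\{i\})$, let $\boldsymbol{G}\in\{0,1\}^{r\times m}$ with row supports $G_j=\{i: g_{j,i}=1\}$, let $k\in[r]$ and let $d\ge1$ be an integer. Suppose $|F_K|\ge d-1+|K|$ for every nonempty $K\subseteq[k]$, where $F_K=\bigcup_{j\in K}G_j$. If $i\in[m]$ satisfies (1) $|F_{[k]}|=d-1+k$, (2) $\{i\}\cup A_i\subseteq F_{[k]}$, and (3) $|A_i|\ge d-1$, then $$\mathrm{mcm}(\boldsymbol{G}_{[k]}^{\{i\}\cup B_i})=1+\mathrm{mcm}(\boldsymbol{G}_{[k]}^{B_i}).$$
   Context: $\boldsymbol{G}_{[k]}^{L}$ is the submatrix of $\boldsymbol{G}$ formed by its first $k$ rows and the columns indexed by $L$. $\mathrm{mcm}(\boldsymbol{G})$ is the maximum number of entries equal to $1$ no two of which lie in the same row or column (maximum matching size of the associated row–column bipartite graph); it is $0$ for a matrix with no columns. *)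

theory Defs
  imports Main
begin

text \<open>A 0/1 matrix G with rows indexed by 1..r and columns by 1..m is modelled as
  a function nat => nat => nat (entry g_{j,i} = G j i).\<close>

definition is_matching :: "(nat \<Rightarrow> nat \<Rightarrow> nat) \<Rightarrow> nat set \<Rightarrow> nat set \<Rightarrow> (nat \<times> nat) set \<Rightarrow> bool" where
  "is_matching G R L M \<longleftrightarrow>
     M \<subseteq> R \<times> L \<and> (\<forall>(j, i) \<in> M. G j i = 1) \<and>
     (\<forall>(j, i) \<in> M. \<forall>(j', i') \<in> M. (j = j' \<or> i = i') \<longrightarrow> (j, i) = (j', i'))"

definition mcm :: "(nat \<Rightarrow> nat \<Rightarrow> nat) \<Rightarrow> nat set \<Rightarrow> nat set \<Rightarrow> nat" where
  "mcm G R L = Max (card ` {M. is_matching G R L M})"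

definition row_supp :: "(nat \<Rightarrow> nat \<Rightarrow> nat) \<Rightarrow> nat \<Rightarrow> nat \<Rightarrow> nat set" where
  "row_supp G m j = {i \<in> {1..m}. G j i = 1}"

definition F_set :: "(nat \<Rightarrow> nat \<Rightarrow> nat) \<Rightarrow> nat \<Rightarrow> nat set \<Rightarrow> nat set" where
  "F_set G m K = (\<Union>j\<in>K. row_supp G m j)"

end

theory Submission
  imports Defs
begin

text \<open>Deleting the single column i lowers the maximum matching size by at most one, so only
  1 + mcm(G^{B_i}) \<le> mcm(G^{{i} \<union> B_i}) needs an argument. Every matching on B_i uses
  only columns of B_i \<inter> F_[k]. Conversely, the column set F_[k] - A_i = {i} \<union> (B_i \<inter> F_[k])
  has at most k elements by (1) and (3), and the surplus condition makes it satisfy Hall's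
  condition towards the rows [k]: for J \<subseteq> F_[k] - A_i, the set K of rows of [k] with no 1
  in the columns J has F_K \<subseteq> F_[k] - J, so d - 1 + |K| \<le> d - 1 + k - |J| by (1), i.e. at
  least |J| rows meet J. Hall's theorem therefore matches all of F_[k] - A_i.\<close>

lemma Hall_condition_finite:
  assumes "\<forall>J\<subseteq>I. card J \<le> card (\<Union>(S ` J))" "x \<in> I"
  shows "finite (S x)"
  using assms(1)[rule_format, of "{x}"] assms(2) by (auto intro: card_ge_0_finite)

lemma Hall_condition_Diff_critical:
  assumes hall: "\<forall>J\<subseteq>I. card J \<le> card (\<Union>(S ` J))"
    and "finite I" "J \<subseteq> I" and critical: "card (\<Union>(S ` J)) = card J"
  shows "\<forall>K\<subseteq>I - J. card K \<le> card (\<Union>((\<lambda>z. S z - \<Union>(S ` J)) ` K))"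
proof (intro allI impI)
  fix K assume K: "K \<subseteq> I - J"
  let ?U = "\<Union>(S ` J)" and ?V = "\<Union>(S ` (K \<union> J))"
  have "K \<union> J \<subseteq> I"
    using K assms(3) by blast
  then have "finite (K \<union> J)"
    using \<open>finite I\<close> by (rule finite_subset)
  moreover have "finite (S x)" if "x \<in> K \<union> J" for x
    using Hall_condition_finite[OF hall] \<open>K \<union> J \<subseteq> I\<close> that by blast
  ultimately have "finite ?V"
    by simp
  have "?U \<subseteq> ?V"
    by blast
  then have "finite ?U"
    using \<open>finite ?V\<close> by (rule finite_subset)
  have "card K + card J = card (K \<union> J)"
    using \<open>finite (K \<union> J)\<close> K by (subst card_Un_disjoint) auto
  also have "\<dots> \<le> card ?V"
    using hall \<open>K \<union> J \<subseteq> I\<close> by blast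
  also have "\<dots> = card (?V - ?U) + card ?U"
    using \<open>finite ?U\<close> \<open>?U \<subseteq> ?V\<close> \<open>finite ?V\<close> by (simp add: card_Diff_subset card_mono)
  also have "?V - ?U = \<Union>((\<lambda>z. S z - ?U) ` K)"
    by blast
  finally show "card K \<le> card (\<Union>((\<lambda>z. S z - ?U) ` K))"
    using critical by simp
qed

lemma Hall_condition_Diff_singleton:
  assumes surplus: "\<forall>J. J \<noteq> {} \<and> J \<subset> I \<longrightarrow> card J < card (\<Union>(S ` J))" and "x \<in> I"
  shows "\<forall>K\<subseteq>I - {x}. card K \<le> card (\<Union>((\<lambda>z. S z - {y}) ` K))"
proof (intro allI impI)
  fix K assume K: "K \<subseteq> I - {x}"
  show "card K \<le> card (\<Union>((\<lambda>z. S z - {y}) ` K))"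
  proof (cases "K = {}")
    case False
    with K \<open>x \<in> I\<close> have "card K < card (\<Union>(S ` K))"
      using surplus by blast
    moreover have "\<Union>((\<lambda>z. S z - {y}) ` K) = \<Union>(S ` K) - {y}"
      by blast
    ultimately show ?thesis
      by (auto simp: card_Diff_singleton_if)
  qed simp
qed

lemma SDR_glue:
  assumes "J \<subseteq> I"
    and g: "inj_on g J" "\<forall>x\<in>J. g x \<in> S x"
    and h: "inj_on h (I - J)" "\<forall>x\<in>I - J. h x \<in> S x - \<Union>(S ` J)"
  shows "\<exists>f. inj_on f I \<and> (\<forall>x\<in>I. f x \<in> S x)"
proof -
  define f where "f z = (if z \<in> J then g z else h z)" for z
  have "inj_on f J" "inj_on f (I - J)"
    using g(1) h(1) by (auto simp: f_def inj_on_def)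
  moreover have "f ` J \<inter> f ` (I - J) = {}"
    using g(2) h(2) by (fastforce simp: f_def)
  moreover have "J - (I - J) = J" "I - J - J = I - J"
    by blast+
  ultimately have "inj_on f (J \<union> (I - J))"
    unfolding inj_on_Un by simp
  moreover have "J \<union> (I - J) = I"
    using \<open>J \<subseteq> I\<close> by blast
  moreover have "\<forall>x\<in>I. f x \<in> S x"
    using g(2) h(2) by (simp add: f_def)
  ultimately show ?thesis
    by auto
qed

text \<open>Halmos and Vaughan's induction: if some nonempty proper J \<subseteq> I is critical
  (|\<Union>S`J| = |J|), match J by induction and the rest with the sets S x - \<Union>S`J;
  otherwise every such J has a surplus, so any x can be matched to any y \<in> S x.\<close>
theorem Hall_marriage:
  assumes "finite I" and "\<forall>J\<subseteq>I. card J \<le> card (\<Union>(S ` J))"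
  shows "\<exists>f. inj_on f I \<and> (\<forall>x\<in>I. f x \<in> S x)"
  using assms
proof (induction "card I" arbitrary: I S rule: less_induct)
  case less
  note fin = less.prems(1) and hall = less.prems(2)
  show ?case
  proof (cases "\<exists>J. J \<noteq> {} \<and> J \<subset> I \<and> card (\<Union>(S ` J)) = card J")
    case True
    then obtain J where J: "J \<noteq> {}" "J \<subset> I" and critical: "card (\<Union>(S ` J)) = card J"
      by blast
    have "finite J"
      using psubset_imp_subset[OF J(2)] fin by (rule finite_subset)
    have "card J < card I"
      using J fin by (simp add: psubset_card_mono)
    moreover have "\<forall>K\<subseteq>J. card K \<le> card (\<Union>(S ` K))"
      using J hall by blast
    ultimately obtain g where g: "inj_on g J" "\<forall>x\<in>J. g x \<in> S x"
      using less.hyps \<open>finite J\<close> by blast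
    have "card (I - J) < card I"
      using J \<open>finite J\<close> \<open>card J < card I\<close> card_gt_0_iff[of J]
      by (simp add: card_Diff_subset psubset_imp_subset)
    moreover have "\<forall>K\<subseteq>I - J. card K \<le> card (\<Union>((\<lambda>z. S z - \<Union>(S ` J)) ` K))"
      using Hall_condition_Diff_critical[OF hall fin _ critical] J by blast
    ultimately obtain h where "inj_on h (I - J)" "\<forall>x\<in>I - J. h x \<in> S x - \<Union>(S ` J)"
      using less.hyps[of "I - J"] fin by blast
    with J(2) g show ?thesis
      by (intro SDR_glue) auto
  next
    case False
    show ?thesis
    proof (cases "I = {}")
      case False
      then obtain x where x: "x \<in> I"
        by blast
      have "card {x} \<le> card (S x)"
        using hall[rule_format, of "{x}"] x by simp
      then obtain y where y: "y \<in> S x"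
        by fastforce
      have "\<forall>J. J \<noteq> {} \<and> J \<subset> I \<longrightarrow> card J < card (\<Union>(S ` J))"
        using hall \<open>\<not> (\<exists>J. _)\<close> by (metis order_le_neq_trans psubset_imp_subset)
      then have "\<forall>K\<subseteq>I - {x}. card K \<le> card (\<Union>((\<lambda>z. S z - {y}) ` K))"
        using x by (rule Hall_condition_Diff_singleton)
      moreover have "card (I - {x}) < card I"
        using fin x by (rule card_Diff1_less)
      ultimately obtain h where h: "inj_on h (I - {x})" "\<forall>z\<in>I - {x}. h z \<in> S z - {y}"
        using less.hyps[of "I - {x}"] fin by blast
      then have "inj_on (h(x := y)) I" "\<forall>z\<in>I. (h(x := y)) z \<in> S z"
        using y by (auto simp: inj_on_def)
      then show ?thesis
        by blast
    qed simp
  qed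
qed

lemma is_matching_iff:
  "is_matching G R L M \<longleftrightarrow>
     M \<subseteq> R \<times> L \<and> (\<forall>(j, c) \<in> M. G j c = 1) \<and> inj_on fst M \<and> inj_on snd M"
  unfolding is_matching_def inj_on_def by fastforce

lemma finite_matchings:
  assumes "finite R" "finite L"
  shows "finite {M. is_matching G R L M}"
  by (rule finite_subset[of _ "Pow (R \<times> L)"]) (auto simp: is_matching_iff assms)

lemma card_le_mcm:
  assumes "finite R" "finite L" "is_matching G R L M"
  shows "card M \<le> mcm G R L"
  unfolding mcm_def using assms by (auto intro: Max_ge finite_imageI finite_matchings)

lemma maximum_matching_exists:
  assumes "finite R" "finite L"
  obtains M where "is_matching G R L M" "card M = mcm G R L"
proof -
  have "is_matching G R L {}"
    by (simp add: is_matching_def)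
  then have "mcm G R L \<in> card ` {M. is_matching G R L M}"
    unfolding mcm_def by (intro Max_in finite_imageI finite_matchings assms) auto
  then obtain M where "is_matching G R L M" "mcm G R L = card M"
    by auto
  with that show thesis
    by simp
qed

lemma mcm_insert_le:
  assumes "finite R" "finite L"
  shows "mcm G R (insert c L) \<le> Suc (mcm G R L)"
proof -
  obtain M where M: "is_matching G R (insert c L) M" "card M = mcm G R (insert c L)"
    using maximum_matching_exists[of R "insert c L" G] assms by auto
  let ?M' = "{p \<in> M. snd p \<noteq> c}"
  have "inj_on snd M"
    using M(1) by (simp add: is_matching_iff)
  have "is_matching G R L ?M'"
    using M(1) by (auto simp: is_matching_iff intro: inj_on_subset)
  then have "snd ` ?M' \<subseteq> L"
    by (auto simp: is_matching_iff)
  then have finite_M': "finite (snd ` ?M')"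
    using assms(2) by (rule finite_subset)
  have "card M = card (snd ` M)"
    using \<open>inj_on snd M\<close> by (simp add: card_image)
  also have "\<dots> \<le> card (insert c (snd ` ?M'))"
    using finite_M' by (intro card_mono) force+
  also have "\<dots> \<le> Suc (card (snd ` ?M'))"
    by (simp add: card_insert_le_m1)
  also have "card (snd ` ?M') = card ?M'"
    using \<open>inj_on snd M\<close> by (auto intro: card_image inj_on_subset)
  also have "\<dots> \<le> mcm G R L"
    using assms \<open>is_matching G R L ?M'\<close> by (rule card_le_mcm)
  finally show ?thesis
    using M(2) by simp
qed

lemma mcm_le_card_covered_columns:
  assumes "finite R" "L \<subseteq> {1..m}"
  shows "mcm G R L \<le> card (L \<inter> F_set G m R)"
proof -
  have "finite L"
    using assms(2) by (rule finite_subset) simp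
  then obtain M where M: "is_matching G R L M" "card M = mcm G R L"
    using maximum_matching_exists[of R L G] assms(1) by auto
  have "snd ` M \<subseteq> L \<inter> F_set G m R"
    using M(1) assms(2) by (force simp: is_matching_iff F_set_def row_supp_def)
  then have "card (snd ` M) \<le> card (L \<inter> F_set G m R)"
    using \<open>finite L\<close> by (intro card_mono) auto
  moreover have "card (snd ` M) = card M"
    using M(1) by (simp add: is_matching_iff card_image)
  ultimately show ?thesis
    using M(2) by simp
qed

lemma card_le_mcm_if_Hall_condition:
  assumes "finite R" "finite L" "C \<subseteq> L"
    and hall: "\<forall>J\<subseteq>C. card J \<le> card {j \<in> R. \<exists>c\<in>J. G j c = 1}"
  shows "card C \<le> mcm G R L"
proof -
  let ?S = "\<lambda>c. {j \<in> R. G j c = 1}"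
  have "\<Union>(?S ` J) = {j \<in> R. \<exists>c\<in>J. G j c = 1}" for J
    by blast
  then have "\<forall>J\<subseteq>C. card J \<le> card (\<Union>(?S ` J))"
    using hall by simp
  moreover have "finite C"
    using assms(3,2) by (rule finite_subset)
  ultimately obtain f where f: "inj_on f C" "\<forall>c\<in>C. f c \<in> ?S c"
    using Hall_marriage[of C ?S] by blast
  let ?M = "(\<lambda>c. (f c, c)) ` C"
  have "is_matching G R L ?M"
    using f assms(3) by (auto simp: is_matching_iff inj_on_def)
  moreover have "card ?M = card C"
    by (simp add: card_image inj_on_def)
  ultimately show ?thesis
    using card_le_mcm assms(1,2) by metis
qed

lemma F_set_subset: "F_set G m K \<subseteq> {1..m}"
  unfolding F_set_def row_supp_def by auto

lemma finite_F_set: "finite (F_set G m K)"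
  using F_set_subset by (rule finite_subset) simp

lemma Hall_condition_if_tight_surplus:
  assumes "finite R"
    and surplus: "\<forall>K. K \<noteq> {} \<and> K \<subseteq> R \<longrightarrow> s + card K \<le> card (F_set G m K)"
    and tight: "card (F_set G m R) = s + card R"
    and J: "J \<subseteq> F_set G m R" "card J \<le> card R"
  shows "card J \<le> card {j \<in> R. \<exists>c\<in>J. G j c = 1}"
proof (cases "{j \<in> R. \<exists>c\<in>J. G j c = 1} = R")
  case True
  with J(2) show ?thesis
    by simp
next
  case False
  let ?N = "{j \<in> R. \<exists>c\<in>J. G j c = 1}"
  let ?K = "R - ?N"
  have "card ?N \<le> card R"
    using \<open>finite R\<close> by (intro card_mono) auto
  have "card J \<le> card (F_set G m R)"
    using finite_F_set J(1) by (rule card_mono)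
  have "?K \<noteq> {}"
    using False by blast
  then have "s + card ?K \<le> card (F_set G m ?K)"
    using surplus[rule_format, of ?K] by (meson Diff_subset)
  also have "\<dots> \<le> card (F_set G m R - J)"
    using finite_F_set by (intro card_mono) (auto simp: F_set_def row_supp_def)
  also have "\<dots> = card (F_set G m R) - card J"
    using finite_F_set J(1) by (simp add: card_Diff_subset finite_subset)
  finally have "s + card ?K \<le> card (F_set G m R) - card J" .
  moreover have "card ?K = card R - card ?N"
    using \<open>finite R\<close> by (simp add: card_Diff_subset)
  ultimately show ?thesis
    using \<open>card ?N \<le> card R\<close> \<open>card J \<le> card (F_set G m R)\<close> tight by linarith
qed

lemma card_le_mcm_if_tight_surplus:
  assumes "finite R"
    and surplus: "\<forall>K. K \<noteq> {} \<and> K \<subseteq> R \<longrightarrow> s + card K \<le> card (F_set G m K)"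
    and tight: "card (F_set G m R) = s + card R"
    and C: "C \<subseteq> F_set G m R" "card C \<le> card R"
    and "finite L" "C \<subseteq> L"
  shows "card C \<le> mcm G R L"
  using \<open>finite R\<close> \<open>finite L\<close> \<open>C \<subseteq> L\<close>
proof (rule card_le_mcm_if_Hall_condition, intro allI impI)
  fix J assume "J \<subseteq> C"
  then have "card J \<le> card C"
    using C(1) finite_F_set by (metis card_mono finite_subset)
  with \<open>J \<subseteq> C\<close> C show "card J \<le> card {j \<in> R. \<exists>c\<in>J. G j c = 1}"
    by (intro Hall_condition_if_tight_surplus[OF \<open>finite R\<close> surplus tight]) auto
qed

theorem lemma2:
  fixes m r k d i :: nat
    and A :: "nat \<Rightarrow> nat set"
    and G :: "nat \<Rightarrow> nat \<Rightarrow> nat"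
  assumes ic_instance: "\<forall>l\<in>{1..m}. A l \<subseteq> {1..m} - {l}"
    and binary: "\<forall>j\<in>{1..r}. \<forall>l\<in>{1..m}. G j l \<in> {0, 1}"
    and k_range: "k \<in> {1..r}"
    and d_pos: "d \<ge> 1"
    and hall: "\<forall>K. K \<noteq> {} \<and> K \<subseteq> {1..k} \<longrightarrow> card (F_set G m K) \<ge> d - 1 + card K"
    and i_range: "i \<in> {1..m}"
    and c1: "card (F_set G m {1..k}) = d - 1 + k"
    and c2: "{i} \<union> A i \<subseteq> F_set G m {1..k}"
    and c3: "card (A i) \<ge> d - 1"
  shows "mcm G {1..k} ({i} \<union> ({1..m} - (A i \<union> {i})))
           = 1 + mcm G {1..k} ({1..m} - (A i \<union> {i}))"
proof -
  define F where "F = F_set G m {1..k}"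
  define B where "B = {1..m} - (A i \<union> {i})"
  have "i \<notin> A i"
    using ic_instance i_range by auto
  then have C: "F - A i = insert i (B \<inter> F)"
    using c2 F_set_subset unfolding F_def B_def by blast
  have "finite F" "A i \<subseteq> F"
    using finite_F_set c2 unfolding F_def by simp_all
  then have "card (F - A i) = card F - card (A i)"
    by (simp add: card_Diff_subset finite_subset)
  then have "card (F - A i) \<le> card {1..k}"
    using c1 c3 unfolding F_def by simp
  then have "card (F - A i) \<le> mcm G {1..k} (insert i B)"
    by (intro card_le_mcm_if_tight_surplus[of "{1..k}" "d - 1" G m])
      (use hall c1 C in \<open>auto simp: F_def B_def\<close>)
  moreover have "card (F - A i) = Suc (card (B \<inter> F))"
    unfolding C using \<open>finite F\<close> by (simp add: B_def)
  moreover have "mcm G {1..k} B \<le> card (B \<inter> F)"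
    unfolding F_def by (rule mcm_le_card_covered_columns) (auto simp: B_def)
  moreover have "mcm G {1..k} (insert i B) \<le> Suc (mcm G {1..k} B)"
    by (rule mcm_insert_le) (auto simp: B_def)
  ultimately show ?thesis
    unfolding B_def by simp
qed

end
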